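(* Let $r \geq 3$ and $n \geq r+1$ be integers. The index $\lambda_1(\Gamma_{1,r-2})$ is the largest root of the polynomial $$f(x) = x^3 + (3-n)x^2 + (3-n-r)x + (n+4)r - (r^2+n+7),$$ and it satisfies $$n-2 \leq \lambda_1(\Gamma_{1,r-2}) < n-1.$$
   Context: A signed graph is a simple graph with each edge assigned a sign $+1$ or $-1$; its adjacency matrix has entry $\sigma(v_iv_j)$ for adjacent $v_i,v_j$ and $0$ otherwise, and its index $\lambda_1$ is the largest eigenvalue of this matrix. $\Gamma_{1,r-2}$ denotes the signed graph on vertices $v_1,\dots,v_n$ obtained from the all-positive complete graph on $\{v_2,\dots,v_n\}$ by adding the vertex $v_1$ joined by one negative edge $v_1v_2$ and by $r-2$ positive edges $v_1v_3,\dots,v_1v_r$ (and no other edges at $v_1$). *)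

theory Defs
  imports "Jordan_Normal_Form.Char_Poly"
begin

text \<open>Vertices v_1,...,v_n are represented by indices 0,...,n-1 (v_k as k-1).
  Adjacency matrix of the signed graph Gamma_{1,r-2} on n vertices:
  all-positive complete graph on v_2..v_n, plus v_1 joined to v_2 negatively
  and to v_3..v_r positively.\<close>
definition Gamma_adj :: "nat \<Rightarrow> nat \<Rightarrow> real mat" where
  "Gamma_adj n r = mat n n (\<lambda>(i, j).
     if i = j then 0
     else if i \<noteq> 0 \<and> j \<noteq> 0 then 1
     else if i = 1 \<or> j = 1 then -1
     else if max i j < r then 1
     else 0)"

definition signed_index :: "real mat \<Rightarrow> real" where
  "signed_index A = Max {x. eigenvalue A x}"

end

theory Submission
  imports Defs
begin

text \<open>Split the vertices into the cells \<open>{v\<^sub>1}\<close>, \<open>{v\<^sub>2}\<close>, \<open>S = {v\<^sub>3, ..., v\<^sub>r}\<close> and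
  \<open>T = {v\<^bsub>r+1\<^esub>, ..., v\<^sub>n}\<close> of sizes 1, 1, \<open>s = r - 2\<close>, \<open>t = n - r\<close>. Within \<open>S\<close> and
  within \<open>T\<close> all rows of \<open>A + I\<close> coincide, so an eigenvector for an eigenvalue
  \<open>\<mu> \<noteq> -1\<close> is constant on \<open>S\<close> and on \<open>T\<close>; eliminating the four block values shows
  that \<open>\<mu>\<close> is a root of \<open>f(z) = (z - s - t)(z\<^sup>2 + z - s - 1) - (s - 1)\<^sup>2\<close>.
  Conversely every root of \<open>f\<close> lifts to a block-constant eigenvector. Finally
  \<open>f(s + t) \<le> 0 < f(s + t + 1)\<close> and \<open>f\<close> is strictly increasing from \<open>s + t = n - 2\<close>
  on, so \<open>f\<close> has a unique root \<open>\<ge> n - 2\<close>, which is both its largest root and the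
  largest eigenvalue.\<close>

text \<open>\<open>index_poly s t\<close> is the characteristic polynomial of the \<open>4 \<times> 4\<close> quotient matrix
  of this partition, divided by \<open>z + 1\<close>.\<close>

definition index_poly :: "real \<Rightarrow> real \<Rightarrow> real \<Rightarrow> real" where
  "index_poly s t z = (z - s - t) * (z\<^sup>2 + z - (s + 1)) - (s - 1)\<^sup>2"

lemma index_poly_strict_mono:
  assumes "s \<ge> 0" "t \<ge> 1" "s + t \<le> y" "y < x"
  shows "index_poly s t y < index_poly s t x"
proof -
  have pos: "y\<^sup>2 + y - (s + 1) > 0"
  proof -
    have "y * y \<ge> 1 * y" using assms by (intro mult_right_mono) auto
    then show ?thesis using assms unfolding power2_eq_square by linarith
  qed
  have "y\<^sup>2 \<le> x\<^sup>2" using assms by (intro power_mono) auto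
  then have le: "y\<^sup>2 + y - (s + 1) \<le> x\<^sup>2 + x - (s + 1)" using assms by linarith
  have "(y - s - t) * (y\<^sup>2 + y - (s + 1)) < (x - s - t) * (y\<^sup>2 + y - (s + 1))"
    using pos assms by (intro mult_strict_right_mono) auto
  also have "\<dots> \<le> (x - s - t) * (x\<^sup>2 + x - (s + 1))"
    using le assms by (intro mult_left_mono) auto
  finally show ?thesis by (simp add: index_poly_def)
qed

lemma index_poly_root_between:
  assumes "s \<ge> 0" "t \<ge> 1"
  obtains \<rho> where "s + t \<le> \<rho>" "\<rho> < s + t + 1" "index_poly s t \<rho> = 0"
proof -
  have lower: "index_poly s t (s + t) \<le> 0" by (simp add: index_poly_def)
  have "(s + 2)\<^sup>2 \<le> (s + t + 1)\<^sup>2" using assms by (intro power_mono) auto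
  then have upper: "index_poly s t (s + t + 1) > 0"
    using assms by (simp add: index_poly_def power2_eq_square algebra_simps)
  have "continuous_on {s + t..s + t + 1} (index_poly s t)"
    unfolding index_poly_def by (intro continuous_intros)
  then obtain \<rho> where "s + t \<le> \<rho>" "\<rho> \<le> s + t + 1" "index_poly s t \<rho> = 0"
    using IVT'[of "index_poly s t" "s + t" 0 "s + t + 1"] lower upper by auto
  moreover have "\<rho> \<noteq> s + t + 1" using upper \<open>index_poly s t \<rho> = 0\<close> by auto
  ultimately show thesis using that by simp
qed

lemma index_poly_root_le:
  assumes "s \<ge> 0" "t \<ge> 1" "s + t \<le> \<rho>" "index_poly s t \<rho> = 0" "index_poly s t x = 0"
  shows "x \<le> \<rho>"
  using index_poly_strict_mono[OF assms(1-3), of x] assms(4,5) by force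

lemma quotient_eigenvalue_root:
  fixes s t \<mu> a b x y :: real
  assumes "\<mu> \<noteq> -1"
    and eq_a: "\<mu> * a = - b + s * x"
    and eq_b: "\<mu> * b = - a + s * x + t * y"
    and eq_x: "(\<mu> + 1) * x = a + b + s * x + t * y"
    and eq_y: "(\<mu> + 1) * y = b + s * x + t * y"
    and nonzero: "a \<noteq> 0 \<or> b \<noteq> 0 \<or> x \<noteq> 0 \<or> y \<noteq> 0"
  shows "index_poly s t \<mu> = 0"
proof -
  define E where "E = \<mu> + 1"
  have "E \<noteq> 0" using assms(1) unfolding E_def by auto
  have x_y: "E * x = E * y + a" using eq_x eq_y unfolding E_def by (simp add: algebra_simps)
  have b_y: "E * b = E * y - a" using eq_b eq_y unfolding E_def by (simp add: algebra_simps)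
  have a_eq: "(\<mu> * E - (s + 1)) * a = (s - 1) * E * y"
  proof -
    have "\<mu> * E * a = - (E * b) + s * (E * x)"
      using arg_cong[OF eq_a, of "\<lambda>z. E * z"] by (simp add: algebra_simps)
    then show ?thesis unfolding x_y b_y by (simp add: algebra_simps)
  qed
  have y_eq: "(\<mu> - s - t) * E * y = (s - 1) * a"
  proof -
    have "\<mu> * E * y = E * b + s * (E * x) + (t - 1) * E * y"
      using arg_cong[OF eq_y, of "\<lambda>z. E * z"] unfolding E_def by (simp add: algebra_simps)
    then show ?thesis unfolding x_y b_y by (simp add: algebra_simps)
  qed
  have char: "index_poly s t \<mu> = (\<mu> - s - t) * (\<mu> * E - (s + 1)) - (s - 1)\<^sup>2"
    unfolding index_poly_def E_def by (simp add: power2_eq_square algebra_simps)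
  show ?thesis
  proof (cases "a = 0")
    case False
    have "(\<mu> - s - t) * ((\<mu> * E - (s + 1)) * a) = (s - 1) * ((\<mu> - s - t) * E * y)"
      unfolding a_eq by (simp add: algebra_simps)
    also have "\<dots> = (s - 1)\<^sup>2 * a" unfolding y_eq by (simp add: power2_eq_square)
    finally have "index_poly s t \<mu> * a = 0" unfolding char by (simp add: algebra_simps)
    then show ?thesis using False by simp
  next
    case True
    then have "y \<noteq> 0" using nonzero x_y b_y \<open>E \<noteq> 0\<close> by auto
    then have "\<mu> - s - t = 0" "s - 1 = 0" using a_eq y_eq True \<open>E \<noteq> 0\<close> by auto
    then show ?thesis unfolding char by simp
  qed
qed

lemma sum_atLeastLessThan_split_01:
  fixes g :: "nat \<Rightarrow> real"
  assumes "2 \<le> r" "r \<le> n"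
  shows "(\<Sum>j<n. g j) = g 0 + g 1 + (\<Sum>j\<in>{2..<r}. g j) + (\<Sum>j\<in>{r..<n}. g j)"
proof -
  have "(\<Sum>j<n. g j) = (\<Sum>j<r. g j) + (\<Sum>j\<in>{r..<n}. g j)"
    using assms by (metis atLeast0LessThan sum.atLeastLessThan_concat zero_le)
  moreover have "(\<Sum>j<r. g j) = g 0 + g 1 + (\<Sum>j\<in>{2..<r}. g j)"
    using assms by (simp add: atLeast0LessThan[symmetric] sum.atLeast_Suc_lessThan numeral_2_eq_2)
  ultimately show ?thesis by simp
qed

lemma sum_if_eq_zero:
  fixes g :: "'a \<Rightarrow> real"
  assumes "finite A"
  shows "(\<Sum>j\<in>A. if i = j then 0 else g j) = (\<Sum>j\<in>A. g j) - (if i \<in> A then g i else 0)"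
proof -
  have "(\<Sum>j\<in>A. g j) = (\<Sum>j\<in>A. (if i = j then 0 else g j) + (if i = j then g j else 0))"
    by (rule sum.cong) auto
  also have "\<dots> = (\<Sum>j\<in>A. if i = j then 0 else g j) + (if i \<in> A then g i else 0)"
    using assms by (simp add: sum.distrib)
  finally show ?thesis by simp
qed

lemma finite_eigenvalues:
  fixes A :: "'a :: field mat"
  assumes "A \<in> carrier_mat n n"
  shows "finite {k. eigenvalue A k}"
proof -
  have "char_poly A \<noteq> 0"
    using degree_monic_char_poly[OF assms] by (metis coeff_0 zero_neq_one)
  then show ?thesis
    using poly_roots_finite eigenvalue_root_char_poly[OF assms] by simp
qed

lemma Gamma_adj_carrier: "Gamma_adj n r \<in> carrier_mat n n"
  unfolding Gamma_adj_def by simp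

lemma Gamma_adj_mult_vec_nth:
  fixes v :: "real vec"
  assumes "2 \<le> r" "r \<le> n" "v \<in> carrier_vec n" "i < n"
  defines "P \<equiv> \<Sum>j\<in>{2..<r}. v $ j" and "R \<equiv> \<Sum>j\<in>{r..<n}. v $ j"
  shows "(Gamma_adj n r *\<^sub>v v) $ i =
     (if i = 0 then - v $ 1 + P
      else if i = 1 then - v $ 0 + P + R
      else if i < r then v $ 0 + v $ 1 + P + R - v $ i
      else v $ 1 + P + R - v $ i)"
proof -
  define e where "e = (\<lambda>(i::nat, j::nat).
     if i = j then 0
     else if i \<noteq> 0 \<and> j \<noteq> 0 then 1
     else if i = 1 \<or> j = 1 then -1
     else if max i j < r then 1
     else (0::real))"
  have "(Gamma_adj n r *\<^sub>v v) $ i = (\<Sum>j<n. e (i, j) * v $ j)"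
    using assms(3,4) unfolding Gamma_adj_def e_def
    by (simp add: scalar_prod_def atLeast0LessThan)
  also have "\<dots> = e (i, 0) * v $ 0 + e (i, 1) * v $ 1 + (\<Sum>j\<in>{2..<r}. e (i, j) * v $ j)
       + (\<Sum>j\<in>{r..<n}. e (i, j) * v $ j)"
    using assms(1,2) by (rule sum_atLeastLessThan_split_01)
  finally have row: "(Gamma_adj n r *\<^sub>v v) $ i = \<dots>" .
  consider "i = 0" | "i = 1" | "2 \<le> i" by linarith
  then show ?thesis
  proof cases
    case 1
    have "(\<Sum>j\<in>{2..<r}. e (i, j) * v $ j) = P" unfolding P_def
      by (rule sum.cong) (auto simp: e_def 1)
    moreover have "(\<Sum>j\<in>{r..<n}. e (i, j) * v $ j) = 0"
      by (rule sum.neutral) (use assms(1) in \<open>auto simp: e_def 1\<close>)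
    ultimately show ?thesis using row 1 by (simp add: e_def)
  next
    case 2
    have "(\<Sum>j\<in>{2..<r}. e (i, j) * v $ j) = P" unfolding P_def
      by (rule sum.cong) (auto simp: e_def 2)
    moreover have "(\<Sum>j\<in>{r..<n}. e (i, j) * v $ j) = R" unfolding R_def
      by (rule sum.cong) (use assms(1) in \<open>auto simp: e_def 2\<close>)
    ultimately show ?thesis using row 2 by (simp add: e_def)
  next
    case 3
    have "(\<Sum>j\<in>{2..<r}. e (i, j) * v $ j) = (\<Sum>j\<in>{2..<r}. if i = j then 0 else v $ j)"
      by (rule sum.cong) (use 3 in \<open>auto simp: e_def\<close>)
    moreover have "(\<Sum>j\<in>{r..<n}. e (i, j) * v $ j) = (\<Sum>j\<in>{r..<n}. if i = j then 0 else v $ j)"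
      by (rule sum.cong) (use 3 assms(1) in \<open>auto simp: e_def\<close>)
    moreover have "e (i, 0) = (if i < r then 1 else 0)" "e (i, 1) = 1" using 3 by (auto simp: e_def)
    ultimately show ?thesis using row 3 assms(4) unfolding P_def R_def by (auto simp: sum_if_eq_zero)
  qed
qed

lemma Gamma_adj_eigenvector_nth:
  assumes "2 \<le> r" "r \<le> n" "w \<in> carrier_vec n" "Gamma_adj n r *\<^sub>v w = \<mu> \<cdot>\<^sub>v w"
    and "2 \<le> i" "i < n"
  shows "(\<mu> + 1) * w $ i
    = (if i < r then w $ 0 else 0) + w $ 1 + (\<Sum>j\<in>{2..<r}. w $ j) + (\<Sum>j\<in>{r..<n}. w $ j)"
proof -
  have "\<mu> * w $ i = (Gamma_adj n r *\<^sub>v w) $ i" using assms(3,4,6) by simp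
  then show ?thesis
    using Gamma_adj_mult_vec_nth[OF assms(1-3,6)] assms(5) by (auto simp: algebra_simps)
qed

lemma sum_atLeastLessThan_const:
  assumes "\<And>j. a \<le> j \<Longrightarrow> j < b \<Longrightarrow> g j = c" "a \<le> b"
  shows "(\<Sum>j\<in>{a..<b}. g j) = (real b - real a) * (c :: real)"
  using assms by (simp add: of_nat_diff)

lemma Gamma_adj_eigenvalue_root:
  assumes "2 \<le> r" "r \<le> n" "eigenvalue (Gamma_adj n r) \<mu>" "\<mu> \<noteq> -1"
  shows "index_poly (real r - 2) (real n - real r) \<mu> = 0"
proof -
  obtain w where w: "w \<in> carrier_vec n" "w \<noteq> 0\<^sub>v n" "Gamma_adj n r *\<^sub>v w = \<mu> \<cdot>\<^sub>v w"
    using assms(3) carrier_matD[OF Gamma_adj_carrier[of n r]]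
    unfolding eigenvalue_def eigenvector_def by auto
  define P where "P = (\<Sum>j\<in>{2..<r}. w $ j)"
  define R where "R = (\<Sum>j\<in>{r..<n}. w $ j)"
  define x where "x = (w $ 0 + w $ 1 + P + R) / (\<mu> + 1)"
  define y where "y = (w $ 1 + P + R) / (\<mu> + 1)"
  have "\<mu> + 1 \<noteq> 0" using assms(4) by (simp add: add_eq_0_iff)
  have w_S: "w $ i = x" if "2 \<le> i" "i < r" for i
    using Gamma_adj_eigenvector_nth[OF assms(1,2) w(1,3), of i] that assms(2) \<open>\<mu> + 1 \<noteq> 0\<close>
    unfolding x_def P_def R_def by (simp add: field_simps)
  have w_T: "w $ i = y" if "r \<le> i" "i < n" for i
    using Gamma_adj_eigenvector_nth[OF assms(1,2) w(1,3), of i] that assms(1) \<open>\<mu> + 1 \<noteq> 0\<close>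
    unfolding y_def P_def R_def by (simp add: field_simps)
  have P: "P = (real r - 2) * x"
    unfolding P_def using sum_atLeastLessThan_const[of 2 r "\<lambda>j. w $ j" x] w_S assms(1) by simp
  have R: "R = (real n - real r) * y"
    unfolding R_def using sum_atLeastLessThan_const[of r n "\<lambda>j. w $ j" y] w_T assms(2) by simp
  have row: "\<mu> * w $ i = (Gamma_adj n r *\<^sub>v w) $ i" if "i < n" for i
    using w(1,3) that by simp
  have "w $ 0 \<noteq> 0 \<or> w $ 1 \<noteq> 0 \<or> x \<noteq> 0 \<or> y \<noteq> 0"
  proof (rule ccontr)
    assume "\<not> ?thesis"
    then have "w $ i = 0" if "i < n" for i
      using w_S w_T that by (cases "i < 2"; cases "i < r") (auto simp: less_2_cases_iff)
    then have "w = 0\<^sub>v n" using w(1) by (intro eq_vecI) auto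
    then show False using w(2) by simp
  qed
  moreover have "\<mu> * w $ 0 = - w $ 1 + (real r - 2) * x"
    using row[of 0] Gamma_adj_mult_vec_nth[OF assms(1,2) w(1), of 0] assms P
    unfolding P_def by simp
  moreover have "\<mu> * w $ 1 = - w $ 0 + (real r - 2) * x + (real n - real r) * y"
    using row[of 1] Gamma_adj_mult_vec_nth[OF assms(1,2) w(1), of 1] assms P R
    unfolding P_def R_def by simp
  moreover have "(\<mu> + 1) * x = w $ 0 + w $ 1 + (real r - 2) * x + (real n - real r) * y"
    using \<open>\<mu> + 1 \<noteq> 0\<close> P R unfolding x_def by simp
  moreover have "(\<mu> + 1) * y = w $ 1 + (real r - 2) * x + (real n - real r) * y"
    using \<open>\<mu> + 1 \<noteq> 0\<close> P R unfolding y_def by simp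
  ultimately show ?thesis using quotient_eigenvalue_root assms(4) by blast
qed

lemma Gamma_adj_eigenvalue_of_root:
  assumes "2 \<le> r" "r < n" "real n - 2 \<le> \<rho>"
    and root: "index_poly (real r - 2) (real n - real r) \<rho> = 0"
  shows "eigenvalue (Gamma_adj n r) \<rho>"
proof -
  define s where "s = real r - 2"
  define t where "t = real n - real r"
  \<comment> \<open>a kernel vector of the quotient matrix minus \<open>\<rho>\<close>, spread over the blocks\<close>
  define y where "y = \<rho> * (\<rho> + 1) - (s + 1)"
  define a where "a = (s - 1) * (\<rho> + 1)"
  define b where "b = y - (s - 1)"
  define x where "x = y + (s - 1)"
  define v where "v = vec n (\<lambda>j. if j = 0 then a else if j = 1 then b else if j < r then x else y)"
  have v: "v \<in> carrier_vec n" unfolding v_def by simp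
  have "1 \<le> t" "s + t \<le> \<rho>" using assms unfolding s_def t_def by auto
  then have "1 * \<rho> \<le> \<rho> * \<rho>" using assms(1) unfolding s_def by (intro mult_right_mono) auto
  then have "y > 0"
    using \<open>1 \<le> t\<close> \<open>s + t \<le> \<rho>\<close> assms(1) unfolding y_def s_def distrib_left by linarith
  have root': "(\<rho> - s - t) * y = (s - 1)\<^sup>2"
    using root unfolding index_poly_def y_def s_def t_def by (simp add: algebra_simps power2_eq_square)
  have P: "(\<Sum>j\<in>{2..<r}. v $ j) = s * x"
    using sum_atLeastLessThan_const[of 2 r "\<lambda>j. v $ j" x] assms unfolding s_def v_def by simp
  have R: "(\<Sum>j\<in>{r..<n}. v $ j) = t * y"
    using sum_atLeastLessThan_const[of r n "\<lambda>j. v $ j" y] assms unfolding t_def v_def by simp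
  have "Gamma_adj n r *\<^sub>v v = \<rho> \<cdot>\<^sub>v v"
  proof (rule eq_vecI)
    fix i assume "i < dim_vec (\<rho> \<cdot>\<^sub>v v)"
    then have "i < n" using v by simp
    have "v $ 0 = a" "v $ 1 = b" using assms(1,2) by (auto simp: v_def)
    then show "(Gamma_adj n r *\<^sub>v v) $ i = (\<rho> \<cdot>\<^sub>v v) $ i"
      using Gamma_adj_mult_vec_nth[OF assms(1) less_imp_le[OF assms(2)] v \<open>i < n\<close>] P R root' \<open>i < n\<close>
      unfolding a_def b_def x_def y_def v_def
      by (auto simp: algebra_simps power2_eq_square)
  qed (use v Gamma_adj_carrier[of n r] in simp)
  moreover have "v \<noteq> 0\<^sub>v n"
  proof
    assume "v = 0\<^sub>v n"
    then have "v $ r = 0" using assms(2) by simp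
    then show False using \<open>y > 0\<close> assms(1,2) by (simp add: v_def)
  qed
  ultimately show ?thesis
    using v carrier_matD[OF Gamma_adj_carrier[of n r]]
    unfolding eigenvalue_def eigenvector_def by auto
qed

lemma signed_index_Gamma_adj:
  assumes "2 \<le> r" "r < n" "real n - 2 \<le> \<rho>"
    and root: "index_poly (real r - 2) (real n - real r) \<rho> = 0"
  shows "signed_index (Gamma_adj n r) = \<rho>"
  unfolding signed_index_def
proof (rule Max_eqI)
  show "finite {k. eigenvalue (Gamma_adj n r) k}"
    by (rule finite_eigenvalues[OF Gamma_adj_carrier])
  show "\<rho> \<in> {k. eigenvalue (Gamma_adj n r) k}"
    using Gamma_adj_eigenvalue_of_root[OF assms] by simp
next
  fix \<mu> assume "\<mu> \<in> {k. eigenvalue (Gamma_adj n r) k}"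
  then have "\<mu> = -1 \<or> index_poly (real r - 2) (real n - real r) \<mu> = 0"
    using Gamma_adj_eigenvalue_root[OF assms(1) less_imp_le[OF assms(2)]] by auto
  then show "\<mu> \<le> \<rho>"
    using index_poly_root_le[of "real r - 2" "real n - real r" \<rho> \<mu>] assms by auto
qed

theorem proposition1p9:
  fixes n r :: nat
  assumes "r \<ge> 3" and "n \<ge> r + 1"
  defines "f \<equiv> [: real (n + 4) * real r - (real r ^ 2 + real n + 7),
                 3 - real n - real r, 3 - real n, 1 :]"
  shows "poly f (signed_index (Gamma_adj n r)) = 0
         \<and> (\<forall>x. poly f x = 0 \<longrightarrow> x \<le> signed_index (Gamma_adj n r))
         \<and> real n - 2 \<le> signed_index (Gamma_adj n r)
         \<and> signed_index (Gamma_adj n r) < real n - 1"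
proof -
  define s where "s = real r - 2"
  define t where "t = real n - real r"
  have "s \<ge> 0" "t \<ge> 1" using assms(1,2) unfolding s_def t_def by auto
  have f: "poly f z = index_poly s t z" for z
    unfolding f_def index_poly_def s_def t_def
    by (simp add: algebra_simps power2_eq_square power3_eq_cube)
  obtain \<rho> where \<rho>: "s + t \<le> \<rho>" "\<rho> < s + t + 1" "index_poly s t \<rho> = 0"
    using index_poly_root_between[OF \<open>s \<ge> 0\<close> \<open>t \<ge> 1\<close>] .
  have "signed_index (Gamma_adj n r) = \<rho>"
    using signed_index_Gamma_adj[of r n \<rho>] assms(1,2) \<rho> unfolding s_def t_def by simp
  moreover have "x \<le> \<rho>" if "poly f x = 0" for x
    using index_poly_root_le[OF \<open>s \<ge> 0\<close> \<open>t \<ge> 1\<close> \<rho>(1,3)] that f by simp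
  ultimately show ?thesis using \<rho> f unfolding s_def t_def by simp
qed

end
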